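(* For every even integer $k\geq 2$, there are infinitely many positive integers $n$ such that $\sum_{i=0}^{k-1} \lambda(n+i)=0$, where $\lambda$ is the Liouville function.
   Context: The Liouville function is $\lambda(n)=(-1)^{\Omega(n)}$, where $\Omega(n)$ is the number of prime factors of $n$ counted with multiplicity. *)

theory Defs
  imports "HOL-Computational_Algebra.Primes"
begin

definition bigomega :: "nat \<Rightarrow> nat" where
  "bigomega n = size (prime_factorization n)"

definition liouville :: "nat \<Rightarrow> int" where
  "liouville n = (-1) ^ bigomega n"

end

theory Submission
  imports Defs "HOL-Analysis.Harmonic_Numbers"
begin

text \<open>Write \<open>S(n)\<close> for the sum of \<open>\<lambda>\<close> over the window \<open>n, \<dots>, n + k - 1\<close> and \<open>L(y)\<close> for its
  sum over \<open>1, \<dots>, y\<close>. As \<open>k\<close> is even, every \<open>S(n)\<close> is even, and \<open>S(n + 1) - S(n) = \<lambda>(n + k) - \<lambda>(n)\<close>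
  is at most 2 in absolute value. If \<open>S\<close> vanished only finitely often, it would therefore eventually
  keep a fixed sign \<open>s\<close>, and \<open>L(y + k) = L(y) + S(y + 1)\<close> would force \<open>s L(y) \<ge> y/k - O(1)\<close>.
  But the sum of \<open>L(X div q)\<close> over \<open>q \<le> X\<close> equals the sum over \<open>n \<le> X\<close> of the divisor sums of
  \<open>\<lambda>\<close>, each of which is 0 or 1 (the indicator of the squares), so it lies in \<open>[0, X]\<close>; the lower
  bound on \<open>s L\<close> makes \<open>s\<close> times it at least \<open>X log X / k - O(X)\<close>.\<close>

lemma liouville_eq_1_or_minus_1: "liouville n = 1 \<or> liouville n = -1"
  unfolding liouville_def by (cases "even (bigomega n)") auto

lemma abs_liouville [simp]: "\<bar>liouville n\<bar> = 1"
  using liouville_eq_1_or_minus_1[of n] by auto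

lemma liouville_prime: "prime p \<Longrightarrow> liouville p = -1"
  by (simp add: liouville_def bigomega_def prime_factorization_prime)

lemma liouville_mult:
  assumes "m > 0" "n > 0"
  shows "liouville (m * n) = liouville m * liouville n"
  using assms by (simp add: liouville_def bigomega_def prime_factorization_mult power_add)

lemma sum_liouville_prime_multiples:
  assumes "prime p" "0 \<notin> E"
  shows "(\<Sum>d\<in>(*) p ` E. liouville d) = - (\<Sum>e\<in>E. liouville e)"
proof -
  have "p > 0" using assms(1) prime_gt_0_nat by blast
  then have "(\<Sum>d\<in>(*) p ` E. liouville d) = (\<Sum>e\<in>E. liouville (p * e))"
    by (simp add: sum.reindex inj_on_def)
  also have "\<dots> = (\<Sum>e\<in>E. - liouville e)"
  proof (rule sum.cong)
    fix e assume "e \<in> E"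
    then have "e > 0" using assms(2) by (auto intro: gr0I)
    then show "liouville (p * e) = - liouville e"
      using assms(1) \<open>p > 0\<close> by (simp add: liouville_mult liouville_prime)
  qed simp
  finally show ?thesis by (simp add: sum_negf)
qed

text \<open>The divisors of \<open>p m\<close> are those of \<open>m\<close> together with \<open>p\<close> times those of \<open>m\<close>; the two
  families cancel except on their overlap, the multiples \<open>p e\<close> dividing \<open>m\<close>.\<close>
lemma liouville_divisor_sum_prime_mult:
  assumes p: "prime p" and m: "m > 0"
  shows "(\<Sum>d | d dvd p * m. liouville d) = (\<Sum>e | p * e dvd m. liouville e)"
proof -
  define A where "A = {d. d dvd m}"
  have "p > 0" using p prime_gt_0_nat by blast
  have "0 \<notin> A" "finite A" using m by (auto simp: A_def)
  have divisors: "{d. d dvd p * m} = A \<union> (*) p ` A"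
  proof (intro set_eqI iffI)
    fix d assume "d \<in> {d. d dvd p * m}"
    then have d: "d dvd p * m" by simp
    show "d \<in> A \<union> (*) p ` A"
    proof (cases "p dvd d")
      case True
      then obtain e where "d = p * e" by blast
      with d \<open>p > 0\<close> show ?thesis by (auto simp: A_def)
    next
      case False
      then have "coprime p d" using p by (simp add: prime_imp_coprime)
      with d show ?thesis by (auto simp: A_def coprime_commute coprime_dvd_mult_right_iff)
    qed
  qed (auto simp: A_def)
  have overlap: "A \<inter> (*) p ` A = (*) p ` {e. p * e dvd m}"
    by (auto simp: A_def image_iff intro: dvd_mult_left dvd_mult_right)
  have "0 \<notin> {e. p * e dvd m}" using m by auto
  have "(\<Sum>d | d dvd p * m. liouville d)
      = sum liouville A + sum liouville ((*) p ` A) - sum liouville (A \<inter> (*) p ` A)"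
    unfolding divisors using \<open>finite A\<close> by (simp add: sum_Un)
  also have "\<dots> = (\<Sum>e | p * e dvd m. liouville e)"
    unfolding overlap using p \<open>0 \<notin> A\<close> \<open>0 \<notin> {e. p * e dvd m}\<close>
    by (simp add: sum_liouville_prime_multiples)
  finally show ?thesis .
qed

lemma liouville_divisor_sum_0_or_1:
  "n > 0 \<Longrightarrow> (\<Sum>d | d dvd n. liouville d) \<in> {0, 1}"
proof (induction n rule: less_induct)
  case (less n)
  show ?case
  proof (cases "n = 1")
    case True
    then show ?thesis by (simp add: liouville_def bigomega_def)
  next
    case False
    then obtain p m where p: "prime p" and n: "n = p * m"
      using prime_factor_nat by (metis dvdE)
    have "m > 0" using n less.prems by auto
    have "p > 1" using p prime_gt_1_nat by blast
    show ?thesis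
    proof (cases "p dvd m")
      case True
      then have "{e. p * e dvd m} = {e. e dvd m div p}"
        using \<open>p > 1\<close> by (auto elim!: dvdE)
      moreover have "m div p < n"
      proof -
        have "m < n" using \<open>m > 0\<close> \<open>p > 1\<close> n by simp
        then show ?thesis using div_le_dividend[of m p] by linarith
      qed
      moreover have "m div p > 0"
        using True \<open>m > 0\<close> \<open>p > 1\<close> by (auto elim!: dvdE)
      ultimately show ?thesis
        using less.IH liouville_divisor_sum_prime_mult[OF p \<open>m > 0\<close>] n by simp
    next
      case False
      then have "{e. p * e dvd m} = {}" using dvd_mult_left by blast
      then show ?thesis using liouville_divisor_sum_prime_mult[OF p \<open>m > 0\<close>] n by simp
    qed
  qed
qed

lemma sum_partial_sums_div_eq_divisor_sums:
  fixes f :: "nat \<Rightarrow> 'a::comm_monoid_add"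
  shows "(\<Sum>q\<in>{1..X}. \<Sum>d\<in>{1..X div q}. f d) = (\<Sum>n\<in>{1..X}. \<Sum>d | d dvd n. f d)"
proof (induction X)
  case 0
  then show ?case by simp
next
  case (Suc X)
  have floor_Suc: "(\<Sum>d\<in>{1..Suc X div q}. f d)
      = (\<Sum>d\<in>{1..X div q}. f d) + (if q dvd Suc X then f (Suc X div q) else 0)" for q
  proof (cases "q dvd Suc X")
    case True
    then have "Suc X div q = Suc (X div q)" using div_Suc[of X q] by (simp add: dvd_eq_mod_eq_0)
    then show ?thesis using True by (simp add: add.commute)
  next
    case False
    then have "Suc X div q = X div q" using div_Suc[of X q] by (simp add: dvd_eq_mod_eq_0)
    then show ?thesis using False by simp
  qed
  have "(\<Sum>q\<in>{1..Suc X}. if q dvd Suc X then f (Suc X div q) else 0)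
      = (\<Sum>q | q dvd Suc X. f (Suc X div q))"
    by (intro sum.mono_neutral_cong_right) (auto simp: Suc_le_eq intro: dvd_imp_le dvd_pos_nat)
  also have "\<dots> = (\<Sum>d | d dvd Suc X. f d)"
    by (intro sum.reindex_bij_witness[of _ "(div) (Suc X)" "(div) (Suc X)"]) (auto elim!: dvdE)
  finally have new_divisors:
    "(\<Sum>q\<in>{1..Suc X}. if q dvd Suc X then f (Suc X div q) else 0) = (\<Sum>d | d dvd Suc X. f d)" .
  have "(\<Sum>q\<in>{1..Suc X}. \<Sum>d\<in>{1..Suc X div q}. f d)
      = (\<Sum>q\<in>{1..Suc X}. \<Sum>d\<in>{1..X div q}. f d)
        + (\<Sum>q\<in>{1..Suc X}. if q dvd Suc X then f (Suc X div q) else 0)"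
    by (simp only: floor_Suc sum.distrib)
  also have "(\<Sum>q\<in>{1..Suc X}. \<Sum>d\<in>{1..X div q}. f d) = (\<Sum>q\<in>{1..X}. \<Sum>d\<in>{1..X div q}. f d)"
    by (simp add: sum.cl_ivl_Suc)
  finally show ?case
    using Suc.IH new_divisors by (simp add: sum.cl_ivl_Suc)
qed

lemma sum_div_quotients_superlinear:
  fixes M :: "nat \<Rightarrow> real"
  assumes "c > 0" and lower: "\<And>y. M y \<ge> c * real y - C"
  shows "\<exists>X. (\<Sum>q\<in>{1..X}. M (X div q)) > real X"
proof (rule ccontr)
  assume "\<nexists>X. (\<Sum>q\<in>{1..X}. M (X div q)) > real X"
  then have upper: "(\<Sum>q\<in>{1..X}. M (X div q)) \<le> real X" for X
    by (simp add: not_less)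
  have "eventually (\<lambda>X. harm X > 1 + (C + 1) / c \<and> X \<ge> 1) sequentially"
    using harm_at_top by (intro eventually_conj) (auto simp: filterlim_at_top_dense eventually_ge_at_top)
  then obtain X where harm_large: "harm X > 1 + (C + 1) / c" and "X \<ge> 1"
    unfolding eventually_sequentially by blast
  have term_lower: "c * (real X / real q) - c - C \<le> M (X div q)" for q
  proof -
    have "real (X div q) = of_int \<lfloor>real X / real q\<rfloor>"
      by (simp add: floor_divide_of_nat_eq)
    then have "real X / real q - 1 \<le> real (X div q)" by linarith
    then have "c * (real X / real q - 1) \<le> c * real (X div q)"
      using \<open>c > 0\<close> by (intro mult_left_mono) auto
    then show ?thesis using lower[of "X div q"] by (simp add: algebra_simps)
  qed
  have "(\<Sum>q\<in>{1..X}. c * (real X / real q) - c - C) = real X * (c * harm X - c - C)"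
    by (simp add: harm_def sum_subtractf sum_distrib_left divide_inverse algebra_simps)
  moreover have "(\<Sum>q\<in>{1..X}. c * (real X / real q) - c - C) \<le> real X"
    using sum_mono[of "{1..X}", OF term_lower] upper[of X] by (rule order_trans)
  moreover have "real X * (c * harm X - c - C - 1) = real X * (c * harm X - c - C) - real X"
    by (simp add: algebra_simps)
  ultimately have "real X * (c * harm X - c - C - 1) \<le> 0"
    by linarith
  then have "c * harm X \<le> c + C + 1"
    using \<open>X \<ge> 1\<close> by (simp add: mult_le_0_iff)
  moreover have "c * harm X > c * (1 + (C + 1) / c)"
    using harm_large \<open>c > 0\<close> by simp
  moreover have "c * (1 + (C + 1) / c) = c + C + 1"
    using \<open>c > 0\<close> by (simp add: field_simps)
  ultimately show False
    by linarith
qed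

definition liouville_sum :: "nat \<Rightarrow> int" where
  "liouville_sum y = (\<Sum>d\<in>{1..y}. liouville d)"

definition liouville_window :: "nat \<Rightarrow> nat \<Rightarrow> int" where
  "liouville_window k n = (\<Sum>i<k. liouville (n + i))"

lemma abs_liouville_sum_le: "\<bar>liouville_sum y\<bar> \<le> int y"
  unfolding liouville_sum_def by (rule order_trans[OF sum_abs]) simp

lemma liouville_sum_add: "liouville_sum (y + k) = liouville_sum y + liouville_window k (Suc y)"
  by (induction k) (simp_all add: liouville_sum_def liouville_window_def sum.cl_ivl_Suc)

lemma sum_liouville_sum_div_bounds:
  "0 \<le> (\<Sum>q\<in>{1..X}. liouville_sum (X div q)) \<and> (\<Sum>q\<in>{1..X}. liouville_sum (X div q)) \<le> int X"
proof -
  have divisor_sum: "(\<Sum>d | d dvd n. liouville d) \<in> {0, 1}" if "n \<in> {1..X}" for n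
    using that liouville_divisor_sum_0_or_1 by simp
  have "(\<Sum>q\<in>{1..X}. liouville_sum (X div q)) = (\<Sum>n\<in>{1..X}. \<Sum>d | d dvd n. liouville d)"
    unfolding liouville_sum_def by (rule sum_partial_sums_div_eq_divisor_sums)
  moreover have "0 \<le> (\<Sum>n\<in>{1..X}. \<Sum>d | d dvd n. liouville d)"
    by (rule sum_nonneg) (use divisor_sum in fastforce)
  moreover have "(\<Sum>n\<in>{1..X}. \<Sum>d | d dvd n. liouville d) \<le> (\<Sum>n\<in>{1..X}. 1)"
    by (rule sum_mono) (use divisor_sum in fastforce)
  ultimately show ?thesis by simp
qed

lemma even_liouville_window: "even k \<Longrightarrow> even (liouville_window k n)"
proof -
  assume "even k"
  have "even (\<Sum>i<k. liouville (n + i) + 1)"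
  proof (rule dvd_sum)
    fix i
    show "even (liouville (n + i) + 1)"
      using liouville_eq_1_or_minus_1[of "n + i"] by auto
  qed
  then show ?thesis
    using \<open>even k\<close> by (simp add: liouville_window_def sum.distrib)
qed

lemma abs_liouville_window_Suc_diff:
  "\<bar>liouville_window k (Suc n) - liouville_window k n\<bar> \<le> 2"
proof -
  have "liouville_window k (Suc n) = liouville_window k n + liouville (n + k) - liouville n"
    using sum.lessThan_Suc_shift[of "\<lambda>i. liouville (n + i)" k]
    by (simp add: liouville_window_def)
  then show ?thesis
    using abs_liouville[of "n + k"] abs_liouville[of n] by linarith
qed

text \<open>Two nonzero even integers of opposite signs differ by at least 4.\<close>
lemma even_nonzero_sign_persistent:
  fixes f :: "nat \<Rightarrow> int"
  assumes even: "\<And>n. n \<ge> N \<Longrightarrow> even (f n)" and nonzero: "\<And>n. n \<ge> N \<Longrightarrow> f n \<noteq> 0"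
    and step: "\<And>n. \<bar>f (Suc n) - f n\<bar> \<le> 2"
  shows "(\<forall>n\<ge>N. f n > 0) \<or> (\<forall>n\<ge>N. f n < 0)"
proof -
  have large: "f n \<ge> 2 \<or> f n \<le> -2" if n: "n \<ge> N" for n
  proof -
    obtain m where "f n = 2 * m" using even[OF n] by (auto elim: evenE)
    moreover have "m \<noteq> 0" using nonzero[OF n] calculation by simp
    ultimately show ?thesis by linarith
  qed
  have sign_Suc: "f (Suc n) > 0 \<longleftrightarrow> f n > 0" if "n \<ge> N" for n
    using large[of n] large[of "Suc n"] step[of n] that by linarith
  have "f (N + j) > 0 \<longleftrightarrow> f N > 0" for j
    by (induction j) (simp_all add: sign_Suc)
  then have "f n > 0 \<longleftrightarrow> f N > 0" if "n \<ge> N" for n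
    using that by (metis le_add_diff_inverse)
  then show ?thesis
    using nonzero by (metis linorder_neqE_linordered_idom order_refl)
qed

lemma linear_lower_bound_of_increments:
  fixes a :: "nat \<Rightarrow> int"
  assumes "k > 0" and lower: "\<And>y. a y \<ge> - int y"
    and increment: "\<And>y. y \<ge> N \<Longrightarrow> a (y + k) \<ge> a y + 1"
  shows "real_of_int (a y) \<ge> real y / real k - 2 * real (N + k)"
proof (induction y rule: less_induct)
  case (less y)
  show ?case
  proof (cases "y < N + k")
    case True
    have "real y / real k \<le> real y"
      using \<open>k > 0\<close> by (simp add: divide_le_eq mult_le_cancel_left1)
    moreover have "real_of_int (a y) \<ge> - real y"
      using lower[of y] by (metis of_int_le_iff of_int_minus of_int_of_nat_eq)
    moreover have "real y \<le> real (N + k)" using True by simp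
    ultimately show ?thesis by (smt (verit))
  next
    case False
    define y' where "y' = y - k"
    have y: "y = y' + k" and "y' \<ge> N" and "y' < y"
      using False \<open>k > 0\<close> by (simp_all add: y'_def)
    have "real y / real k = real y' / real k + 1"
      using \<open>k > 0\<close> y by (simp add: field_simps)
    moreover have "real_of_int (a y) \<ge> real_of_int (a y') + 1"
      using increment[OF \<open>y' \<ge> N\<close>] y by simp
    ultimately show ?thesis
      using less.IH[OF \<open>y' < y\<close>] by linarith
  qed
qed

lemma liouville_window_not_eventually_signed:
  fixes s :: int
  assumes "k > 0" and s: "s = 1 \<or> s = -1"
    and signed: "\<And>n. n \<ge> N \<Longrightarrow> s * liouville_window k n > 0"
  shows False
proof -
  define a where "a y = s * liouville_sum y" for y
  have a_lower: "real_of_int (a y) \<ge> (1 / real k) * real y - 2 * real (N + k)" for y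
  proof -
    have "a y \<ge> - int y" for y
      using abs_liouville_sum_le[of y] s by (auto simp: a_def)
    moreover have "a (y + k) \<ge> a y + 1" if "y \<ge> N" for y
      using signed[of "Suc y"] that liouville_sum_add[of y k] by (simp add: a_def distrib_left)
    ultimately show ?thesis
      using linear_lower_bound_of_increments[OF \<open>k > 0\<close>] by simp
  qed
  then obtain X where X: "(\<Sum>q\<in>{1..X}. real_of_int (a (X div q))) > real X"
    using sum_div_quotients_superlinear[where c = "1 / real k" and C = "2 * real (N + k)",
        OF _ a_lower] \<open>k > 0\<close> by auto
  have "(\<Sum>q\<in>{1..X}. a (X div q)) = s * (\<Sum>q\<in>{1..X}. liouville_sum (X div q))"
    by (simp add: a_def sum_distrib_left)
  then have "(\<Sum>q\<in>{1..X}. a (X div q)) \<le> int X"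
    using sum_liouville_sum_div_bounds[of X] s by auto
  then show False
    using X by (simp flip: of_int_sum)
qed

theorem corollary5p1:
  fixes k :: nat
  assumes "even k" and "k \<ge> 2"
  shows "infinite {n :: nat. n > 0 \<and> (\<Sum>i<k. liouville (n + i)) = 0}"
proof
  assume "finite {n :: nat. n > 0 \<and> (\<Sum>i<k. liouville (n + i)) = 0}"
  then obtain N where N: "{n :: nat. n > 0 \<and> (\<Sum>i<k. liouville (n + i)) = 0} \<subseteq> {..<N}"
    using finite_nat_bounded by blast
  have nonzero: "liouville_window k n \<noteq> 0" if "n \<ge> Suc N" for n
  proof
    assume "liouville_window k n = 0"
    then have "n \<in> {n :: nat. n > 0 \<and> (\<Sum>i<k. liouville (n + i)) = 0}"
      using that by (simp add: liouville_window_def)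
    then have "n < N" using N by blast
    then show False using that by simp
  qed
  have "k > 0" using assms(2) by simp
  have "(\<forall>n\<ge>Suc N. liouville_window k n > 0) \<or> (\<forall>n\<ge>Suc N. liouville_window k n < 0)"
    by (rule even_nonzero_sign_persistent)
      (use even_liouville_window[OF \<open>even k\<close>] nonzero abs_liouville_window_Suc_diff in auto)
  then show False
    using liouville_window_not_eventually_signed[OF \<open>k > 0\<close>, of 1 "Suc N"]
      liouville_window_not_eventually_signed[OF \<open>k > 0\<close>, of "-1" "Suc N"] by auto
qed

end
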